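(* Let $C$ be a finite set of candidates, $a\in C$, and $P=(\succ_1,\dots,\succ_n)$ a profile of linear orders over $C$. Let $B$ be the $0/1$ matrix with rows indexed by $b\in C\setminus\{a\}$ and columns indexed by voters $i\in\{1,\dots,n\}$, with $B_{b,i}=1$ iff $b\succ_i a$. (This is the constraint matrix of the program (Young-IP): minimise $\sum_i d_i$ subject to $\sum_{i:\,b\succ_i a}d_i\ge\mathrm{maj}(b,a)+1$ for all $b\ne a$, $d_i\in\{0,1\}$, ignoring the bounds on $d_i$; here $\mathrm{maj}(b,a)=|\{i:b\succ_ia\}|-|\{i:a\succ_ib\}|$.) If $P$ is single-crossing, then $B$ is totally unimodular.
   Context: A profile of linear orders is single-crossing if the voters can be ordered so that for every pair $a,b\in C$, the set of voters $i$ with $a\succ_i b$ forms an interval of this voter ordering. A matrix is totally unimodular if every square submatrix has determinant in $\{-1,0,1\}$. *)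

theory Defs
  imports Main "Jordan_Normal_Form.Determinant"
begin

text \<open>A profile: voters 0..n-1, voter i has strict preference relation P i,
  where (x,y) in P i means x is preferred to y by voter i.\<close>

definition is_profile :: "'c set \<Rightarrow> nat \<Rightarrow> (nat \<Rightarrow> ('c \<times> 'c) set) \<Rightarrow> bool" where
  "is_profile C n P \<longleftrightarrow> (\<forall>i<n. strict_linear_order_on C (P i) \<and> P i \<subseteq> C \<times> C)"

definition single_crossing :: "'c set \<Rightarrow> nat \<Rightarrow> (nat \<Rightarrow> ('c \<times> 'c) set) \<Rightarrow> bool" where
  "single_crossing C n P \<longleftrightarrow>
     (\<exists>\<sigma>. bij_betw \<sigma> {..<n} {..<n} \<and>
        (\<forall>x\<in>C. \<forall>y\<in>C. \<forall>j1 j2 j3. j1 \<le> j2 \<and> j2 \<le> j3 \<and> j3 < n \<and>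
            (x, y) \<in> P (\<sigma> j1) \<and> (x, y) \<in> P (\<sigma> j3) \<longrightarrow> (x, y) \<in> P (\<sigma> j2)))"

definition totally_unimodular :: "'r set \<Rightarrow> 's set \<Rightarrow> ('r \<Rightarrow> 's \<Rightarrow> int) \<Rightarrow> bool" where
  "totally_unimodular R S M \<longleftrightarrow>
     (\<forall>k rr cc. inj_on rr {..<k} \<and> rr ` {..<k} \<subseteq> R \<and> inj_on cc {..<k} \<and> cc ` {..<k} \<subseteq> S \<longrightarrow>
        det (mat k k (\<lambda>(i, j). M (rr i) (cc j))) \<in> {-1, 0, 1})"

definition young_matrix :: "(nat \<Rightarrow> ('c \<times> 'c) set) \<Rightarrow> 'c \<Rightarrow> 'c \<Rightarrow> nat \<Rightarrow> int" where
  "young_matrix P a b i = (if (b, a) \<in> P i then 1 else 0)"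

end

theory Submission
  imports Defs
begin

text \<open>Order the voters along the single-crossing axis. Then for each candidate b the voters
  ranking b above a form an interval of that axis, so every square submatrix of the
  Young matrix is, after permuting its columns by their position on the axis, an interval
  matrix: row i is the indicator of an interval [l i, u i] of column positions. The
  determinant of an interval matrix is in {-1, 0, 1}: in the column with the smallest
  position, subtracting the row whose interval ends first from another row meeting that
  column keeps the determinant and the interval shape while removing one entry of the column;
  once at most one entry is left, Laplace expansion along the column reduces the size.\<close>

definition interval_mat :: "nat \<Rightarrow> (nat \<Rightarrow> nat) \<Rightarrow> (nat \<Rightarrow> nat) \<Rightarrow> (nat \<Rightarrow> nat) \<Rightarrow> int mat" where
  "interval_mat k l u p = mat k k (\<lambda>(i, j). if p j \<in> {l i..u i} then 1 else 0)"

lemma interval_mat_carrier [simp]: "interval_mat k l u p \<in> carrier_mat k k"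
  by (simp add: interval_mat_def)

lemma interval_mat_dim [simp]:
  "dim_row (interval_mat k l u p) = k" "dim_col (interval_mat k l u p) = k"
  by (simp_all add: interval_mat_def)

lemma interval_mat_index [simp]:
  "i < k \<Longrightarrow> j < k \<Longrightarrow> interval_mat k l u p $$ (i, j) = (if p j \<in> {l i..u i} then 1 else 0)"
  by (simp add: interval_mat_def)

lemma mat_delete_interval_mat:
  "mat_delete (interval_mat (Suc m) l u p) i0 j0 =
     interval_mat m (l \<circ> insert_index i0) (u \<circ> insert_index i0) (p \<circ> insert_index j0)"
  by (rule eq_matI) (auto simp: mat_delete_def insert_index_def)

text \<open>On the columns, rows i0 and i1 are the indicators of [.., u i0] and [.., u i1], since
  no column lies left of l i0 or l i1; their difference is the indicator of (u i0, u i1].\<close>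

lemma addrow_interval_mat:
  assumes "i0 < k" and "i1 < k" and "i1 \<noteq> i0" and "u i0 \<le> u i1"
    and "\<forall>j<k. l i0 \<le> p j \<and> l i1 \<le> p j"
  shows "addrow (-1) i1 i0 (interval_mat k l u p) = interval_mat k (l(i1 := Suc (u i0))) u p"
  by (rule eq_matI) (use assms in \<open>auto simp: mat_addrow_def\<close>)

lemma det_interval_mat_zero_column:
  assumes "j0 < k" and "\<forall>i<k. p j0 \<notin> {l i..u i}"
  shows "det (interval_mat k l u p) = 0"
  unfolding laplace_expansion_column[OF interval_mat_carrier \<open>j0 < k\<close>]
  by (rule sum.neutral) (use assms in auto)

lemma det_interval_mat_unit_column:
  assumes "i0 < Suc m" and "j0 < Suc m" and "\<forall>i<Suc m. p j0 \<in> {l i..u i} \<longleftrightarrow> i = i0"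
  shows "det (interval_mat (Suc m) l u p) = (-1) ^ (i0 + j0) *
    det (interval_mat m (l \<circ> insert_index i0) (u \<circ> insert_index i0) (p \<circ> insert_index j0))"
proof -
  let ?A = "interval_mat (Suc m) l u p"
  have "det ?A = (\<Sum>i<Suc m. ?A $$ (i, j0) * cofactor ?A i j0)"
    by (rule laplace_expansion_column[OF interval_mat_carrier \<open>j0 < Suc m\<close>])
  also have "\<dots> = (\<Sum>i<Suc m. if i = i0 then cofactor ?A i j0 else 0)"
    using assms by (intro sum.cong) auto
  also have "\<dots> = cofactor ?A i0 j0"
    using \<open>i0 < Suc m\<close> by simp
  finally show ?thesis
    by (simp add: cofactor_def mat_delete_interval_mat)
qed

lemma det_interval_mat:
  assumes "inj_on p {..<k}"
  shows "det (interval_mat k l u p) \<in> {-1, 0, 1}"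
  using assms
proof (induction k arbitrary: l u p)
  case 0
  show ?case by (simp add: interval_mat_def det_def)
next
  case (Suc m)
  obtain j0 where j0: "j0 < Suc m" "\<forall>j<Suc m. p j0 \<le> p j"
    using ex_has_least_nat[of "\<lambda>j. j < Suc m" 0 p] by auto
  define hits where "hits l = {i. i < Suc m \<and> p j0 \<in> {l i..u i}}" for l
  have "det (interval_mat (Suc m) l u p) \<in> {-1, 0, 1}" for l
  proof (induction "card (hits l)" arbitrary: l rule: less_induct)
    case less
    have fin: "finite (hits l)" by (simp add: hits_def)
    consider "card (hits l) = 0" | "card (hits l) = 1" | "card (hits l) \<ge> 2" by linarith
    then show ?case
    proof cases
      case 1
      then show ?thesis
        using fin det_interval_mat_zero_column[OF j0(1)] by (auto simp: hits_def)
    next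
      case 2
      then obtain i0 where "hits l = {i0}" by (auto simp: card_Suc_eq)
      then have unit: "i0 < Suc m" "\<forall>i<Suc m. p j0 \<in> {l i..u i} \<longleftrightarrow> i = i0"
        by (auto simp: hits_def)
      have "inj_on (p \<circ> insert_index j0) {..<m}"
        by (rule comp_inj_on[OF insert_index_inj_on inj_on_subset[OF Suc.prems]])
           (auto simp: insert_index_def)
      then show ?thesis
        using Suc.IH
          det_interval_mat_unit_column[where l = l and u = u and p = p, OF unit(1) j0(1) unit(2)]
        by (auto simp: minus_one_power_iff)
    next
      case 3
      have "hits l \<noteq> {}"
        using 3 by auto
      then obtain i0 where i0: "i0 \<in> hits l" "\<forall>i\<in>hits l. u i0 \<le> u i"
        using ex_has_least_nat[of "\<lambda>i. i \<in> hits l" _ u] by blast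
      obtain i1 where i1: "i1 \<in> hits l" "i1 \<noteq> i0"
        using 3 fin by (metis card_le_Suc0_iff_eq numeral_2_eq_2 not_less_eq_eq)
      let ?l' = "l(i1 := Suc (u i0))"
      have rows: "i0 < Suc m" "i1 < Suc m" "u i0 \<le> u i1"
        "\<forall>j<Suc m. l i0 \<le> p j \<and> l i1 \<le> p j"
        using i0 i1 j0(2) by (auto simp: hits_def intro: order_trans)
      have "det (interval_mat (Suc m) ?l' u p) =
          det (addrow (-1) i1 i0 (interval_mat (Suc m) l u p))"
        by (simp add: addrow_interval_mat[OF rows(1,2) i1(2) rows(3,4)])
      also have "\<dots> = det (interval_mat (Suc m) l u p)"
        by (rule det_addrow[OF rows(1) i1(2) interval_mat_carrier])
      finally have "det (interval_mat (Suc m) ?l' u p) = det (interval_mat (Suc m) l u p)" .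
      moreover have "hits ?l' = hits l - {i1}"
        using i0 by (auto simp: hits_def)
      then have "card (hits ?l') < card (hits l)"
        using card_Diff1_less[OF fin i1(1)] by simp
      ultimately show ?thesis
        using less by metis
    qed
  qed
  then show ?case .
qed

lemma totally_unimodular_interval_matrix:
  fixes \<pi> :: "'s \<Rightarrow> nat"
  assumes "inj_on \<pi> S"
    and "\<And>r s. r \<in> R \<Longrightarrow> s \<in> S \<Longrightarrow> M r s = (if \<pi> s \<in> {l r..u r} then 1 else 0)"
  shows "totally_unimodular R S M"
  unfolding totally_unimodular_def
proof (intro allI impI)
  fix k rr and cc :: "nat \<Rightarrow> 's"
  assume sub: "inj_on rr {..<k} \<and> rr ` {..<k} \<subseteq> R \<and> inj_on cc {..<k} \<and> cc ` {..<k} \<subseteq> S"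
  have "mat k k (\<lambda>(i, j). M (rr i) (cc j)) = interval_mat k (l \<circ> rr) (u \<circ> rr) (\<pi> \<circ> cc)"
    by (rule eq_matI) (use sub in \<open>auto simp: assms(2) image_subset_iff\<close>)
  moreover have "inj_on (\<pi> \<circ> cc) {..<k}"
    using sub by (intro comp_inj_on inj_on_subset[OF assms(1)]) auto
  ultimately show "det (mat k k (\<lambda>(i, j). M (rr i) (cc j))) \<in> {-1, 0, 1}"
    using det_interval_mat by simp
qed

lemma convex_nat_set_eq_atLeastAtMost:
  fixes S :: "nat set"
  assumes "finite S" and "\<And>x y z. x \<in> S \<Longrightarrow> z \<in> S \<Longrightarrow> x \<le> y \<Longrightarrow> y \<le> z \<Longrightarrow> y \<in> S"
  shows "\<exists>l u. S = {l..u}"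
proof (cases "S = {}")
  case True
  then show ?thesis by (intro exI[of _ 1] exI[of _ 0]) simp
next
  case False
  have "S = {Min S..Max S}"
  proof
    show "S \<subseteq> {Min S..Max S}"
      using assms(1) by auto
    show "{Min S..Max S} \<subseteq> S"
      using assms(2)[OF Min_in[OF assms(1) False] Max_in[OF assms(1) False]] by auto
  qed
  then show ?thesis by blast
qed

lemma single_crossing_preferring_voters_interval:
  assumes "a \<in> C" and "single_crossing C n P"
  obtains \<sigma> l u where "bij_betw \<sigma> {..<n} {..<n}"
    and "\<And>b t. b \<in> C \<Longrightarrow> t < n \<Longrightarrow> (b, a) \<in> P (\<sigma> t) \<longleftrightarrow> t \<in> {l b..u b}"
proof -
  obtain \<sigma> where \<sigma>: "bij_betw \<sigma> {..<n} {..<n}"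
    and convex: "\<forall>x\<in>C. \<forall>y\<in>C. \<forall>j1 j2 j3. j1 \<le> j2 \<and> j2 \<le> j3 \<and> j3 < n \<and>
            (x, y) \<in> P (\<sigma> j1) \<and> (x, y) \<in> P (\<sigma> j3) \<longrightarrow> (x, y) \<in> P (\<sigma> j2)"
    using assms(2) unfolding single_crossing_def by (elim exE conjE) (rule that)
  have "\<exists>l u. {t. t < n \<and> (b, a) \<in> P (\<sigma> t)} = {l..u}" if "b \<in> C" for b
  proof (rule convex_nat_set_eq_atLeastAtMost)
    show "finite {t. t < n \<and> (b, a) \<in> P (\<sigma> t)}"
      by simp
    show "y \<in> {t. t < n \<and> (b, a) \<in> P (\<sigma> t)}"
      if "x \<in> {t. t < n \<and> (b, a) \<in> P (\<sigma> t)}" "z \<in> {t. t < n \<and> (b, a) \<in> P (\<sigma> t)}"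
        "x \<le> y" "y \<le> z" for x y z
      using that convex[rule_format, OF \<open>b \<in> C\<close> assms(1), of x y z] by auto
  qed
  then obtain l u where "\<And>b. b \<in> C \<Longrightarrow> {t. t < n \<and> (b, a) \<in> P (\<sigma> t)} = {l b..u b}"
    by metis
  then show ?thesis
    using that[OF \<sigma>] by blast
qed

theorem mainTheorem8:
  fixes C :: "'c set" and a :: 'c and n :: nat and P :: "nat \<Rightarrow> ('c \<times> 'c) set"
  assumes "finite C" and "a \<in> C" and "is_profile C n P" and "single_crossing C n P"
  shows "totally_unimodular (C - {a}) {..<n} (young_matrix P a)"
proof -
  obtain \<sigma> l u where \<sigma>: "bij_betw \<sigma> {..<n} {..<n}"
    and interval: "\<And>b t. b \<in> C \<Longrightarrow> t < n \<Longrightarrow> (b, a) \<in> P (\<sigma> t) \<longleftrightarrow> t \<in> {l b..u b}"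
    using single_crossing_preferring_voters_interval[OF assms(2,4)] by blast
  let ?position = "the_inv_into {..<n} \<sigma>"
  have position: "bij_betw ?position {..<n} {..<n}"
    using bij_betw_the_inv_into[OF \<sigma>] .
  show ?thesis
  proof (rule totally_unimodular_interval_matrix)
    show "inj_on ?position {..<n}"
      using position by (rule bij_betw_imp_inj_on)
    show "young_matrix P a b i = (if ?position i \<in> {l b..u b} then 1 else 0)"
      if "b \<in> C - {a}" "i \<in> {..<n}" for b i
      using that interval[of b "?position i"] bij_betwE[OF position]
        f_the_inv_into_f_bij_betw[OF \<sigma>]
      by (simp add: young_matrix_def)
  qed
qed

end
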